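(* Let $d\in\mathbb{N}$ and $M(t)=t\log(e+t)$, $t>0$. There are constants $0<c_d\le C_d$ depending only on $d$ such that for every measurable function $f$ on $\mathbb{R}^d$, $$c_d\Big(\|f\|_{L_M(\mathbb{R}^d)}+\int_{\mathbb{R}^d}|f(s)|\log(1+|s|)ds\Big)\le \|f\chi_{\mathbb{B}^d}\|_{L_M(\mathbb{R}^d)}+\|(Vf)\chi_{\mathbb{B}^d}\|_{L_M(\mathbb{R}^d)}\le C_d\Big(\|f\|_{L_M(\mathbb{R}^d)}+\int_{\mathbb{R}^d}|f(s)|\log(1+|s|)ds\Big).$$
   Context: $\mathbb{B}^d$ is the unit ball of $\mathbb{R}^d$ with Lebesgue measure. $(Vf)(t)=|t|^{-2d}f(t/|t|^2)$. $\|g\|_{L_M}=\inf\{\lambda>0:\int M(|g|/\lambda)\le1\}$ (Lebesgue measure); quantities may be $+\infty$. *)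

theory Defs
  imports "HOL-Analysis.Analysis"
begin

definition LlogL :: "real \<Rightarrow> real" where
  "LlogL t = t * ln (exp 1 + t)"

text \<open>Luxemburg norm w.r.t. Lebesgue measure, valued in [0, \<infinity>]
  (infimum of the empty set is \<infinity>).\<close>
definition orlicz_norm :: "(real \<Rightarrow> real) \<Rightarrow> ('a::euclidean_space \<Rightarrow> real) \<Rightarrow> ennreal" where
  "orlicz_norm M g = Inf {ennreal l | l. l > 0 \<and>
      (\<integral>\<^sup>+ x. ennreal (M (\<bar>g x\<bar> / l)) \<partial>lebesgue) \<le> 1}"

text \<open>Inversion operator (Vf)(t) = |t|^(-2d) f(t/|t|^2), with d = DIM('a);
  at t = 0 it evaluates to 0 (a null set).\<close>
definition Vop :: "('a::euclidean_space \<Rightarrow> real) \<Rightarrow> 'a \<Rightarrow> real" where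
  "Vop f t = inverse (norm t ^ (2 * DIM('a))) * f (t /\<^sub>R (norm t ^ 2))"

end

(*
  Write d = DIM('a), w(t) = |t|^(-2d) and \<iota>(t) = t/|t|^2, so that V f = w * (f o \<iota>).
  The inversion \<iota> is an involution exchanging the punctured unit ball and the exterior of the
  ball, so after the substitution s = \<iota>(t) the LlogL-modular of (V f) \<chi>_B at level \<lambda> becomes
  the modular of f outside the ball with integrand (|f|/\<lambda>) log(e + |s|^(2d) |f|/\<lambda>).
  The substitution is only needed up to a constant: the image of w * Lebesgue measure under \<iota> is
  dominated by a multiple of Lebesgue measure, because on small balls away from 0 the inversion has
  explicit Lipschitz bounds, and the Vitali covering lemma extends ball estimates to Borel sets.
  For the upper bound, the weight |s|^(2d) inside the logarithm costs at most 2d log(1 + |s|).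
  For the lower bound, log |s| is dominated by that logarithm wherever |f|/\<lambda> \<ge> |s|^(1/2 - 2d);
  elsewhere |f| log |s| is bounded by the integrable function |s|^(-d - 1/4).
*)

theory Submission
  imports Defs
begin

section \<open>Lebesgue domination from estimates on small balls\<close>

lemma emeasure_UN_countable_le:
  assumes "countable I" and sets: "\<And>i. i \<in> I \<Longrightarrow> X i \<in> sets M"
  shows "emeasure M (\<Union>i\<in>I. X i) \<le> (\<integral>\<^sup>+i. emeasure M (X i) \<partial>count_space I)"
proof (cases "finite I")
  case True
  then show ?thesis
    using sets by (simp add: nn_integral_count_space_finite emeasure_subadditive_finite image_subset_iff)
next
  case False
  then have bij: "bij_betw (from_nat_into I) UNIV I"
    using \<open>countable I\<close> by (rule bij_betw_from_nat_into[rotated])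
  have "(\<Union>i\<in>I. X i) = (\<Union>n. X (from_nat_into I n))"
    using False \<open>countable I\<close> by (intro UN_from_nat_into) auto
  also have "emeasure M \<dots> \<le> (\<Sum>n. emeasure M (X (from_nat_into I n)))"
    using bij sets by (intro emeasure_subadditive_countably) (auto simp: bij_betw_def)
  also have "\<dots> = (\<integral>\<^sup>+i. emeasure M (X i) \<partial>count_space I)"
    by (simp only: nn_integral_count_space_nat[symmetric]) (rule nn_integral_bij_count_space[OF bij])
  finally show ?thesis .
qed

lemma ball_in_borel [measurable]: "ball (x::'a::euclidean_space) r \<in> sets borel"
  by simp

lemma lborel_outer_open:
  fixes E :: "'a::euclidean_space set"
  assumes E: "E \<in> sets borel" and "0 < e"
  obtains T where "open T" "E \<subseteq> T" "emeasure lborel T \<le> emeasure lborel E + ennreal e"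
proof -
  have E_leb: "E \<in> sets lebesgue"
    using E by (simp add: sets_completionI_sets)
  obtain T where "open T" "E \<subseteq> T" "T - E \<in> lmeasurable" "emeasure lebesgue (T - E) < ennreal e"
    by (rule sets_lebesgue_outer_open[OF E_leb \<open>0 < e\<close>])
  have "emeasure lborel T = emeasure lebesgue (E \<union> (T - E))"
    using \<open>open T\<close> \<open>E \<subseteq> T\<close> by (simp add: Un_absorb1)
  also have "\<dots> \<le> emeasure lebesgue E + emeasure lebesgue (T - E)"
    using E_leb \<open>T - E \<in> lmeasurable\<close> by (intro emeasure_subadditive) (auto dest: fmeasurableD)
  also have "\<dots> \<le> emeasure lborel E + ennreal e"
    using E \<open>emeasure lebesgue (T - E) < ennreal e\<close> by (intro add_mono) (simp_all add: less_imp_le)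
  finally show ?thesis
    by (rule that[OF \<open>open T\<close> \<open>E \<subseteq> T\<close>])
qed

lemma emeasure_le_lborel_of_Vitali_cover:
  fixes \<nu> :: "'a::euclidean_space measure"
  assumes sets_\<nu>: "sets \<nu> = sets borel" and "T \<in> sets borel"
    and r: "\<And>x. x \<in> E \<Longrightarrow> 0 < r x \<and> r x \<le> 1 \<and> ball x (r x) \<subseteq> T"
    and balls: "\<And>x. x \<in> E \<Longrightarrow> emeasure \<nu> (ball x (5 * r x)) \<le> ennreal K * emeasure lborel (ball x (r x))"
  shows "emeasure \<nu> E \<le> ennreal K * emeasure lborel T"
proof -
  have "E \<subseteq> (\<Union>x\<in>E. ball x (r x))"
  proof
    fix x
    assume "x \<in> E"
    moreover have "x \<in> ball x (r x)"
      using r[OF \<open>x \<in> E\<close>] by simp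
    ultimately show "x \<in> (\<Union>x\<in>E. ball x (r x))"
      by blast
  qed
  then obtain C where "countable C" "C \<subseteq> E"
    and disj: "pairwise (\<lambda>i j. disjnt (ball i (r i)) (ball j (r j))) C"
    and cover: "E \<subseteq> (\<Union>i\<in>C. ball i (5 * r i))"
    by (rule Vitali_covering_lemma_balls[where a="\<lambda>x. x" and B=1]) (use r in auto)
  have "(\<Union>i\<in>C. ball i (5 * r i)) \<in> sets \<nu>"
    unfolding sets_\<nu> using \<open>countable C\<close> by (intro sets.countable_UN') auto
  then have "emeasure \<nu> E \<le> emeasure \<nu> (\<Union>i\<in>C. ball i (5 * r i))"
    by (rule emeasure_mono[OF cover])
  also have "\<dots> \<le> (\<integral>\<^sup>+i. emeasure \<nu> (ball i (5 * r i)) \<partial>count_space C)"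
    using \<open>countable C\<close> by (intro emeasure_UN_countable_le) (auto simp: sets_\<nu>)
  also have "\<dots> \<le> (\<integral>\<^sup>+i. ennreal K * emeasure lborel (ball i (r i)) \<partial>count_space C)"
    using balls \<open>C \<subseteq> E\<close> by (intro nn_integral_mono) auto
  also have "\<dots> = ennreal K * (\<integral>\<^sup>+i. emeasure lborel (ball i (r i)) \<partial>count_space C)"
    by (rule nn_integral_cmult) simp
  also have "(\<integral>\<^sup>+i. emeasure lborel (ball i (r i)) \<partial>count_space C) = emeasure lborel (\<Union>i\<in>C. ball i (r i))"
    using \<open>countable C\<close> disj
    by (intro emeasure_UN_countable[symmetric]) (auto simp: disjoint_family_on_def pairwise_def disjnt_def)
  also have "emeasure lborel (\<Union>i\<in>C. ball i (r i)) \<le> emeasure lborel T"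
    using r \<open>C \<subseteq> E\<close> \<open>T \<in> sets borel\<close> by (intro emeasure_mono) auto
  finally show ?thesis
    by (simp add: mult_left_mono)
qed

lemma emeasure_le_lborel_of_small_balls:
  fixes \<nu> :: "'a::euclidean_space measure"
  assumes sets_\<nu>: "sets \<nu> = sets borel" and E: "E \<in> sets borel" and "0 \<le> K"
    and balls: "\<And>x. x \<in> E \<Longrightarrow> \<exists>\<delta>>0. \<forall>r. 0 < r \<and> r < \<delta> \<longrightarrow>
                  emeasure \<nu> (ball x (5 * r)) \<le> ennreal K * emeasure lborel (ball x r)"
  shows "emeasure \<nu> E \<le> ennreal K * emeasure lborel E"
proof (rule ennreal_le_epsilon)
  fix e :: real
  assume "0 < e"
  define e' where "e' = e / (K + 1)"
  have "0 < e'"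
    using \<open>0 < e\<close> \<open>0 \<le> K\<close> by (simp add: e'_def)
  obtain T where "open T" "E \<subseteq> T" and T: "emeasure lborel T \<le> emeasure lborel E + ennreal e'"
    using lborel_outer_open[OF E \<open>0 < e'\<close>] by blast
  have "\<forall>x\<in>E. \<exists>r. (0 < r \<and> r \<le> 1 \<and> ball x r \<subseteq> T) \<and>
          emeasure \<nu> (ball x (5 * r)) \<le> ennreal K * emeasure lborel (ball x r)"
  proof
    fix x
    assume x: "x \<in> E"
    obtain \<delta> where "0 < \<delta>" and \<delta>: "\<And>r. 0 < r \<Longrightarrow> r < \<delta> \<Longrightarrow>
        emeasure \<nu> (ball x (5 * r)) \<le> ennreal K * emeasure lborel (ball x r)"
      using balls[OF x] by blast
    obtain \<epsilon> where "0 < \<epsilon>" "ball x \<epsilon> \<subseteq> T"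
      using \<open>open T\<close> \<open>E \<subseteq> T\<close> x openE by blast
    define \<rho> where "\<rho> = min (\<delta> / 2) (min 1 \<epsilon>)"
    have "0 < \<rho>" "\<rho> < \<delta>" "\<rho> \<le> 1" "ball x \<rho> \<subseteq> T"
      using \<open>0 < \<delta>\<close> \<open>0 < \<epsilon>\<close> subset_ball[of \<rho> \<epsilon> x] \<open>ball x \<epsilon> \<subseteq> T\<close> by (auto simp: \<rho>_def)
    then show "\<exists>r. (0 < r \<and> r \<le> 1 \<and> ball x r \<subseteq> T) \<and>
        emeasure \<nu> (ball x (5 * r)) \<le> ennreal K * emeasure lborel (ball x r)"
      using \<delta>[of \<rho>] by blast
  qed
  from bchoice[OF this] obtain r where "\<forall>x\<in>E. (0 < r x \<and> r x \<le> 1 \<and> ball x (r x) \<subseteq> T) \<and>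
      emeasure \<nu> (ball x (5 * r x)) \<le> ennreal K * emeasure lborel (ball x (r x))" ..
  then have r: "\<And>x. x \<in> E \<Longrightarrow> 0 < r x \<and> r x \<le> 1 \<and> ball x (r x) \<subseteq> T"
    and r_balls: "\<And>x. x \<in> E \<Longrightarrow> emeasure \<nu> (ball x (5 * r x)) \<le> ennreal K * emeasure lborel (ball x (r x))"
    by auto
  have "emeasure \<nu> E \<le> ennreal K * emeasure lborel T"
    by (rule emeasure_le_lborel_of_Vitali_cover[OF sets_\<nu> borel_open[OF \<open>open T\<close>] r r_balls])
  also have "\<dots> \<le> ennreal K * (emeasure lborel E + ennreal e')"
    using T by (rule mult_left_mono) simp
  also have "\<dots> = ennreal K * emeasure lborel E + ennreal (K * e')"
    using \<open>0 \<le> K\<close> \<open>0 < e'\<close> by (simp add: distrib_left ennreal_mult)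
  also have "\<dots> \<le> ennreal K * emeasure lborel E + ennreal e"
    using \<open>0 < e\<close> \<open>0 \<le> K\<close> by (intro add_left_mono ennreal_leI) (simp add: e'_def field_simps)
  finally show "emeasure \<nu> E \<le> ennreal K * emeasure lborel E + ennreal e" .
qed

section \<open>The inversion\<close>

text \<open>Both functions vanish at \<open>0\<close> (division by zero), matching the convention of \<open>Vop\<close>.\<close>

definition inversion :: "'a::euclidean_space \<Rightarrow> 'a" where
  "inversion t = t /\<^sub>R norm t ^ 2"

definition inversion_weight :: "'a::euclidean_space \<Rightarrow> real" where
  "inversion_weight t = inverse (norm t ^ (2 * DIM('a)))"

lemma Vop_eq: "Vop f t = inversion_weight t * f (inversion t)"
  by (simp add: Vop_def inversion_weight_def inversion_def)

lemma norm_inversion [simp]: "norm (inversion t) = inverse (norm t)"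
  by (cases "t = 0") (simp_all add: inversion_def power2_eq_square field_simps)

lemma inversion_inversion [simp]: "inversion (inversion t) = t"
  by (cases "t = 0") (simp_all add: inversion_def power2_eq_square field_simps)

lemma inversion_eq_0_iff [simp]: "inversion t = 0 \<longleftrightarrow> t = 0"
  by (simp add: inversion_def)

lemma inversion_weight_0 [simp]: "inversion_weight 0 = 0"
  by (simp add: inversion_weight_def)

lemma inversion_weight_nonneg: "0 \<le> inversion_weight t"
  by (simp add: inversion_weight_def)

lemma inversion_weight_inversion:
  fixes t :: "'a::euclidean_space"
  shows "inversion_weight (inversion t) = norm t ^ (2 * DIM('a))"
  by (simp add: inversion_weight_def power_inverse)

lemma inversion_measurable [measurable]: "inversion \<in> borel_measurable borel"
  unfolding inversion_def by measurable

lemma inversion_weight_measurable [measurable]: "inversion_weight \<in> borel_measurable borel"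
  unfolding inversion_weight_def by measurable

lemma Vop_measurable [measurable]:
  assumes [measurable]: "f \<in> borel_measurable borel"
  shows "Vop f \<in> borel_measurable borel"
  unfolding Vop_eq[abs_def] by measurable

lemma dist_inversion:
  assumes "x \<noteq> 0" "y \<noteq> 0"
  shows "dist (inversion x) (inversion y) = dist x y / (norm x * norm y)"
proof -
  have "(dist (inversion x) (inversion y))\<^sup>2 = (dist x y / (norm x * norm y))\<^sup>2"
    using assms
    by (simp add: dist_norm power2_norm_eq_inner inversion_def inner_diff inner_commute
        power_divide field_simps)
  then show ?thesis
    by (rule power2_eq_imp_eq) auto
qed

lemma inversion_in_ballD:
  fixes x :: "'a::euclidean_space"
  assumes "x \<noteq> 0" "2 * \<rho> \<le> norm x" "inversion t \<in> ball x \<rho>"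
  shows "inversion_weight t \<le> (3/2 * norm x) ^ (2 * DIM('a))"
    and "t \<in> ball (inversion x) (2 * \<rho> / norm x ^ 2)"
proof -
  define y where "y = inversion t"
  have "dist x y < \<rho>"
    using assms(3) by (simp add: y_def)
  then have y: "norm x / 2 \<le> norm y" "norm y \<le> 3/2 * norm x"
    using assms norm_triangle_ineq2[of x y] norm_triangle_ineq2[of y x]
    by (auto simp: dist_norm norm_minus_commute)
  then have "0 < norm y"
    using assms by auto
  have "0 \<le> \<rho>"
    using \<open>dist x y < \<rho>\<close> zero_le_dist[of x y] by linarith
  have "inversion_weight t = norm y ^ (2 * DIM('a))"
    using inversion_weight_inversion[of y] by (simp add: y_def)
  then show "inversion_weight t \<le> (3/2 * norm x) ^ (2 * DIM('a))"
    using y by (simp add: power_mono)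
  have "t = inversion y"
    by (simp add: y_def)
  then have "dist (inversion x) t = dist x y / (norm x * norm y)"
    using assms \<open>0 < norm y\<close> by (simp add: dist_inversion)
  also have "\<dots> < \<rho> / (norm x * norm y)"
    using \<open>dist x y < \<rho>\<close> assms \<open>0 < norm y\<close> by (intro divide_strict_right_mono) auto
  also have "\<dots> \<le> \<rho> / (norm x * (norm x / 2))"
    using \<open>0 \<le> \<rho>\<close> \<open>0 < norm y\<close> assms y by (intro divide_left_mono mult_left_mono) auto
  also have "\<dots> = 2 * \<rho> / norm x ^ 2"
    by (simp add: power2_eq_square)
  finally show "t \<in> ball (inversion x) (2 * \<rho> / norm x ^ 2)"
    by simp
qed

lemma nn_integral_inversion_ball_le:
  fixes x :: "'a::euclidean_space"
  assumes "x \<noteq> 0" "0 < \<rho>" "2 * \<rho> \<le> norm x"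
  shows "(\<integral>\<^sup>+t. ennreal (inversion_weight t) * indicator (ball x \<rho>) (inversion t) \<partial>lborel)
           \<le> emeasure lborel (ball x (9/2 * \<rho>))"
proof -
  define c where "c = (3/2 * norm x) ^ (2 * DIM('a))"
  define R where "R = 2 * \<rho> / norm x ^ 2"
  have "ennreal (inversion_weight t) * indicator (ball x \<rho>) (inversion t)
          \<le> ennreal c * indicator (ball (inversion x) R) t" for t
    using inversion_in_ballD[OF assms(1,3), of t] by (cases "inversion t \<in> ball x \<rho>") (auto simp: c_def R_def ennreal_leI)
  then have "(\<integral>\<^sup>+t. ennreal (inversion_weight t) * indicator (ball x \<rho>) (inversion t) \<partial>lborel)
              \<le> (\<integral>\<^sup>+t. ennreal c * indicator (ball (inversion x) R) t \<partial>lborel)"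
    by (intro nn_integral_mono)
  also have "\<dots> = ennreal c * emeasure lborel (ball (inversion x) R)"
    by (intro nn_integral_cmult_indicator) auto
  also have "\<dots> = ennreal (unit_ball_vol (DIM('a)) * (c * R ^ DIM('a)))"
    using assms by (simp add: emeasure_ball R_def c_def ennreal_mult[symmetric] ac_simps)
  also have "c * R ^ DIM('a) = ((3/2 * norm x) ^ 2 * R) ^ DIM('a)"
    by (simp add: c_def power_mult power_mult_distrib)
  also have "(3/2 * norm x) ^ 2 * R = 9/2 * \<rho>"
    using assms by (simp add: R_def power2_eq_square field_simps)
  also have "ennreal (unit_ball_vol (DIM('a)) * (9/2 * \<rho>) ^ DIM('a)) = emeasure lborel (ball x (9/2 * \<rho>))"
    using assms by (simp add: emeasure_ball)
  finally show ?thesis .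
qed

definition inversion_measure :: "'a::euclidean_space measure" where
  "inversion_measure = distr (density lborel (\<lambda>t. ennreal (inversion_weight t))) borel inversion"

lemma sets_inversion_measure [simp, measurable_cong]: "sets inversion_measure = sets borel"
  by (simp add: inversion_measure_def)

lemma nn_integral_inversion_measure:
  assumes "g \<in> borel_measurable borel"
  shows "(\<integral>\<^sup>+s. g s \<partial>inversion_measure) = (\<integral>\<^sup>+t. ennreal (inversion_weight t) * g (inversion t) \<partial>lborel)"
  using assms by (simp add: inversion_measure_def nn_integral_distr nn_integral_density)

lemma emeasure_inversion_measure:
  assumes "A \<in> sets borel"
  shows "emeasure inversion_measure A = (\<integral>\<^sup>+t. ennreal (inversion_weight t) * indicator A (inversion t) \<partial>lborel)"
  using nn_integral_inversion_measure[of "indicator A"] assms by simp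

lemma emeasure_inversion_measure_0 [simp]: "emeasure inversion_measure {0::'a::euclidean_space} = 0"
proof -
  have "emeasure inversion_measure {0::'a}
          = (\<integral>\<^sup>+t. ennreal (inversion_weight t) * indicator {0} (inversion (t::'a)) \<partial>lborel)"
    by (simp add: emeasure_inversion_measure)
  also have "\<dots> = (\<integral>\<^sup>+t. 0 \<partial>(lborel :: 'a measure))"
    by (intro nn_integral_cong) (auto simp: indicator_def)
  finally show ?thesis
    by simp
qed

lemma emeasure_inversion_measure_ball_le:
  fixes x :: "'a::euclidean_space"
  assumes "x \<noteq> 0" "0 < r" "10 * r \<le> norm x"
  shows "emeasure inversion_measure (ball x (5 * r))
           \<le> ennreal ((45/2) ^ DIM('a)) * emeasure lborel (ball x r)"
proof -
  have "emeasure inversion_measure (ball x (5 * r))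
          = (\<integral>\<^sup>+t. ennreal (inversion_weight t) * indicator (ball x (5 * r)) (inversion t) \<partial>lborel)"
    by (simp add: emeasure_inversion_measure)
  also have "\<dots> \<le> emeasure lborel (ball x (9/2 * (5 * r)))"
    using assms by (intro nn_integral_inversion_ball_le) auto
  also have "\<dots> = ennreal ((45/2) ^ DIM('a)) * emeasure lborel (ball x r)"
    using assms by (simp add: emeasure_ball ennreal_mult[symmetric] power_divide power_mult_distrib)
  finally show ?thesis .
qed

text \<open>In fact \<open>inversion_measure\<close> is Lebesgue measure, the Jacobian determinant of the
  inversion being \<open>-|t|^(-2d)\<close>; domination up to a constant is all that is needed, and it avoids
  computing the Jacobian.\<close>

lemma inversion_measure_le:
  "inversion_measure \<le> density lborel (\<lambda>_::'a::euclidean_space. ennreal ((45/2) ^ DIM('a)))"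
proof (subst le_measure, simp, intro ballI)
  fix A :: "'a set"
  assume "A \<in> sets inversion_measure"
  then have A: "A \<in> sets borel"
    by simp
  have "{0::'a} \<in> null_sets inversion_measure"
    by (auto intro: null_setsI)
  then have "emeasure inversion_measure A = emeasure inversion_measure (A - {0})"
    using A by (simp add: emeasure_Diff_null_set)
  also have "\<dots> \<le> ennreal ((45/2) ^ DIM('a)) * emeasure lborel (A - {0})"
  proof (rule emeasure_le_lborel_of_small_balls)
    fix x assume "x \<in> A - {0}"
    then show "\<exists>\<delta>>0. \<forall>r. 0 < r \<and> r < \<delta> \<longrightarrow> emeasure inversion_measure (ball x (5 * r))
                 \<le> ennreal ((45/2) ^ DIM('a)) * emeasure lborel (ball x r)"
      by (intro exI[of _ "norm x / 10"]) (auto intro: emeasure_inversion_measure_ball_le)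
  qed (use A in auto)
  also have "\<dots> \<le> ennreal ((45/2) ^ DIM('a)) * emeasure lborel A"
    using A by (intro mult_left_mono emeasure_mono) auto
  also have "\<dots> = emeasure (density lborel (\<lambda>_. ennreal ((45/2) ^ DIM('a)))) A"
    using A by (simp add: emeasure_density_const)
  finally show "emeasure inversion_measure A \<le> emeasure (density lborel (\<lambda>_. ennreal ((45/2) ^ DIM('a)))) A" .
qed

lemma nn_integral_inversion_le:
  fixes g :: "'a::euclidean_space \<Rightarrow> ennreal"
  assumes [measurable]: "g \<in> borel_measurable borel"
  shows "(\<integral>\<^sup>+t. ennreal (inversion_weight t) * g (inversion t) \<partial>lborel)
           \<le> ennreal ((45/2) ^ DIM('a)) * (\<integral>\<^sup>+s. g s \<partial>lborel)"
proof -
  have "(\<integral>\<^sup>+t. ennreal (inversion_weight t) * g (inversion t) \<partial>lborel) = (\<integral>\<^sup>+s. g s \<partial>inversion_measure)"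
    by (simp add: nn_integral_inversion_measure)
  also have "\<dots> \<le> (\<integral>\<^sup>+s. g s \<partial>density lborel (\<lambda>_. ennreal ((45/2) ^ DIM('a))))"
    by (intro nn_integral_mono_measure inversion_measure_le) simp
  also have "\<dots> = ennreal ((45/2) ^ DIM('a)) * (\<integral>\<^sup>+s. g s \<partial>lborel)"
    by (simp add: nn_integral_density nn_integral_cmult)
  finally show ?thesis .
qed

text \<open>Since the inversion is an involution and \<open>inversion_weight t * inversion_weight (inversion t) = 1\<close>
  for \<open>t \<noteq> 0\<close>, the reverse inequality is the previous one applied to
  \<open>\<lambda>s. inversion_weight s * g (inversion s)\<close>.\<close>

lemma nn_integral_le_inversion:
  fixes g :: "'a::euclidean_space \<Rightarrow> ennreal"
  assumes [measurable]: "g \<in> borel_measurable borel"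
  shows "(\<integral>\<^sup>+s. g s \<partial>lborel)
           \<le> ennreal ((45/2) ^ DIM('a)) * (\<integral>\<^sup>+t. ennreal (inversion_weight t) * g (inversion t) \<partial>lborel)"
proof -
  have "(\<integral>\<^sup>+s. g s \<partial>lborel) = (\<integral>\<^sup>+t. ennreal (inversion_weight t) *
          (ennreal (inversion_weight (inversion t)) * g (inversion (inversion t))) \<partial>lborel)"
  proof (rule nn_integral_cong_AE)
    show "AE t in lborel. g t = ennreal (inversion_weight t) *
            (ennreal (inversion_weight (inversion t)) * g (inversion (inversion t)))"
      using AE_lborel_singleton[of 0]
      by eventually_elim
        (simp add: inversion_weight_inversion inversion_weight_nonneg mult.assoc[symmetric]
          ennreal_mult[symmetric], simp add: inversion_weight_def)
  qed
  also have "\<dots> \<le> ennreal ((45/2) ^ DIM('a)) * (\<integral>\<^sup>+t. ennreal (inversion_weight t) * g (inversion t) \<partial>lborel)"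
    by (rule nn_integral_inversion_le) measurable
  finally show ?thesis .
qed

lemma AE_Vop_eq:
  fixes f g :: "'a::euclidean_space \<Rightarrow> real"
  assumes "AE x in lborel. f x = g x"
  shows "AE t in lborel. Vop f t = Vop g t"
proof -
  obtain N where N: "N \<in> null_sets lborel" and fg: "\<And>x. x \<notin> N \<Longrightarrow> f x = g x"
    using AE_E3[OF assms] by auto
  have [measurable]: "N \<in> sets borel"
    using N by auto
  have "(\<integral>\<^sup>+t. ennreal (inversion_weight t) * indicator N (inversion t) \<partial>lborel)
          \<le> ennreal ((45/2) ^ DIM('a)) * (\<integral>\<^sup>+s. indicator N s \<partial>lborel)"
    by (rule nn_integral_inversion_le) measurable
  also have "\<dots> = 0"
    using N by (simp add: null_setsD1)
  finally have "(\<integral>\<^sup>+t. ennreal (inversion_weight t) * indicator N (inversion t) \<partial>lborel) = 0"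
    by simp
  then have "AE t in lborel. ennreal (inversion_weight t) * indicator N (inversion t) = 0"
    by (subst (asm) nn_integral_0_iff_AE) auto
  then show ?thesis
    by eventually_elim
      (auto simp: Vop_eq fg inversion_weight_nonneg indicator_def split: if_splits)
qed

section \<open>The Young function \<open>t log(e + t)\<close>\<close>

lemma ln_exp1_add_ge_1: "0 \<le> x \<Longrightarrow> 1 \<le> ln (exp 1 + (x::real))"
  using ln_le_cancel_iff[of "exp 1" "exp 1 + x"] by (simp add: add_pos_nonneg)

lemma ln_exp1_add_mono: "0 \<le> x \<Longrightarrow> x \<le> y \<Longrightarrow> ln (exp 1 + x) \<le> ln (exp 1 + (y::real))"
  by (subst ln_le_cancel_iff) (auto simp: add_pos_nonneg)

lemma LlogL_0 [simp]: "LlogL 0 = 0"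
  by (simp add: LlogL_def)

lemma LlogL_nonneg: "0 \<le> x \<Longrightarrow> 0 \<le> LlogL x"
  using ln_exp1_add_ge_1[of x] by (simp add: LlogL_def)

lemma le_LlogL: "0 \<le> x \<Longrightarrow> x \<le> LlogL x"
  using ln_exp1_add_ge_1[of x] by (simp add: LlogL_def mult_le_cancel_left1)

lemma LlogL_mono: "0 \<le> x \<Longrightarrow> x \<le> y \<Longrightarrow> LlogL x \<le> LlogL y"
  unfolding LlogL_def using ln_exp1_add_ge_1[of x] ln_exp1_add_mono[of x y]
  by (intro mult_mono) auto

lemma LlogL_div_le:
  assumes "0 \<le> x" "1 \<le> c"
  shows "LlogL (x / c) \<le> LlogL x / c"
proof -
  have "x / c \<le> x / 1"
    using assms by (intro divide_left_mono) auto
  then have "x / c * ln (exp 1 + x / c) \<le> x / c * ln (exp 1 + x)"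
    using assms by (intro mult_left_mono ln_exp1_add_mono) auto
  then show ?thesis
    by (simp add: LlogL_def)
qed

lemma LlogL_measurable [measurable]: "LlogL \<in> borel_measurable borel"
  unfolding LlogL_def[abs_def] by measurable

lemma LlogL_le_weighted: "0 \<le> G \<Longrightarrow> 1 \<le> \<rho> \<Longrightarrow> LlogL G \<le> G * ln (exp 1 + \<rho> * G)"
  unfolding LlogL_def by (intro mult_left_mono ln_exp1_add_mono) (auto simp: mult_le_cancel_right1)

lemma weighted_le_LlogL_add_log:
  fixes G r :: real
  assumes "0 \<le> G" "1 \<le> r"
  shows "G * ln (exp 1 + r ^ (2 * d) * G) \<le> LlogL G + 2 * d * (G * ln (1 + r))"
proof -
  have "exp 1 + r ^ (2 * d) * G \<le> (exp 1 + G) * r ^ (2 * d)"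
    using assms by (simp add: algebra_simps)
  then have "ln (exp 1 + r ^ (2 * d) * G) \<le> ln ((exp 1 + G) * r ^ (2 * d))"
    using assms by (subst ln_le_cancel_iff) (auto simp: add_pos_nonneg)
  also have "\<dots> = ln (exp 1 + G) + 2 * d * ln r"
    using assms add_pos_nonneg[of "exp 1" G] by (simp add: ln_mult ln_realpow)
  also have "\<dots> \<le> ln (exp 1 + G) + 2 * d * ln (1 + r)"
    using assms by (intro add_left_mono mult_left_mono) auto
  finally have "ln (exp 1 + r ^ (2 * d) * G) \<le> ln (exp 1 + G) + 2 * d * ln (1 + r)" .
  then have "G * ln (exp 1 + r ^ (2 * d) * G) \<le> G * (ln (exp 1 + G) + 2 * d * ln (1 + r))"
    by (rule mult_left_mono) (use assms in simp)
  also have "\<dots> = LlogL G + 2 * d * (G * ln (1 + r))"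
    by (simp add: LlogL_def distrib_left mult.left_commute)
  finally show ?thesis
    by simp
qed

text \<open>Either \<open>r^(2d) G \<ge> r^(1/2)\<close>, and the logarithm on the right controls \<open>ln r\<close>, or
  \<open>G < r^(1/2 - 2d)\<close>, and then \<open>G ln r \<le> 4 r^(3/4 - 2d)\<close> since \<open>ln r \<le> 4 r^(1/4)\<close>.\<close>

lemma mult_ln_le_weighted:
  fixes G r :: real
  assumes G: "0 \<le> G" and r: "1 \<le> r" and d: "1 \<le> d"
  shows "G * ln r \<le> 2 * (G * ln (exp 1 + r ^ (2 * d) * G)) + 4 * r powr - (d + 1/4)"
proof (cases "r powr (1/2 - 2 * d) \<le> G")
  case True
  have "r powr (1/2) = r ^ (2 * d) * r powr (1/2 - 2 * d)"
    using r by (simp add: powr_realpow[symmetric] powr_add[symmetric])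
  also have "\<dots> \<le> r ^ (2 * d) * G"
    using True by (intro mult_left_mono) auto
  also have "\<dots> \<le> exp 1 + r ^ (2 * d) * G"
    by simp
  finally have "ln (r powr (1/2)) \<le> ln (exp 1 + r ^ (2 * d) * G)"
    using r G by (subst ln_le_cancel_iff) (auto intro: add_pos_nonneg)
  then have "1/2 * ln r \<le> ln (exp 1 + r ^ (2 * d) * G)"
    using r by (simp add: ln_powr)
  then have "G * ln r \<le> G * (2 * ln (exp 1 + r ^ (2 * d) * G))"
    using G by (intro mult_left_mono) auto
  then show ?thesis
    using powr_ge_zero[of r "- (d + 1/4)"] by linarith
next
  case False
  have "G * ln r \<le> r powr (1/2 - 2 * d) * (4 * r powr (1/4))"
    using False r ln_powr_bound[OF r, of "1/4"] by (intro mult_mono) auto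
  also have "\<dots> = 4 * r powr (3/4 - 2 * d)"
    by (simp add: powr_add[symmetric] algebra_simps)
  also have "\<dots> \<le> 4 * r powr - (d + 1/4)"
    using r d by (intro mult_left_mono powr_mono) auto
  finally have "G * ln r \<le> 4 * r powr - (d + 1/4)" .
  moreover have "0 \<le> G * ln (exp 1 + r ^ (2 * d) * G)"
    using ln_exp1_add_ge_1[of "r ^ (2 * d) * G"] G r by simp
  ultimately show ?thesis
    by linarith
qed

lemma ln_one_plus_le: "1 \<le> r \<Longrightarrow> ln (1 + r) \<le> 1 + ln (r::real)"
proof -
  assume r: "1 \<le> r"
  then have "1 + r \<le> exp 1 * r"
    using exp_ge_add_one_self[of 1] mult_right_mono[of 2 "exp 1" r] by linarith
  then have "ln (1 + r) \<le> ln (exp 1 * r)"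
    using r by (subst ln_le_cancel_iff) auto
  also have "\<dots> = 1 + ln r"
    using r by (simp add: ln_mult)
  finally show ?thesis .
qed

lemma log_le_weighted:
  fixes G r :: real
  assumes G: "0 \<le> G" and r: "1 \<le> r" and d: "1 \<le> d"
  shows "G * ln (1 + r) \<le> 3 * (G * ln (exp 1 + r ^ (2 * d) * G)) + 4 * r powr - (d + 1/4)"
proof -
  have "G \<le> G * ln (exp 1 + r ^ (2 * d) * G)"
    using ln_exp1_add_ge_1[of "r ^ (2 * d) * G"] G r by (simp add: mult_le_cancel_left1)
  moreover have "G * ln (1 + r) \<le> G * (1 + ln r)"
    using ln_one_plus_le[OF r] G by (rule mult_left_mono)
  moreover have "G * (1 + ln r) = G + G * ln r"
    by (simp add: distrib_left)
  ultimately show ?thesis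
    using mult_ln_le_weighted[OF G r d] by linarith
qed

section \<open>An integrable majorant outside the unit ball\<close>

lemma norm_powr_le_dyadic_sum:
  fixes s :: "'a::euclidean_space" and p :: real
  assumes "0 \<le> p"
  shows "ennreal (norm s powr - p) * indicator (- ball 0 1) s
           \<le> (\<Sum>k. ennreal (2 powr (- p * k)) * indicator (ball 0 (2 ^ Suc k)) s)"
proof (cases "1 \<le> norm s")
  case True
  then have "0 < norm s"
    by linarith
  define k where "k = nat \<lfloor>log 2 (norm s)\<rfloor>"
  have "0 \<le> log 2 (norm s)"
    using True by (subst zero_le_log_cancel_iff) auto
  then have "\<lfloor>log 2 (norm s)\<rfloor> = int k"
    by (simp add: k_def)
  then have k: "2 powr k \<le> norm s" "norm s < 2 powr (k + 1)"
    using floor_log_eq_powr_iff[of "norm s" 2 "int k"] \<open>0 < norm s\<close> by (auto simp: ac_simps)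
  have "norm s powr - p \<le> (2 powr k) powr - p"
    using k(1) \<open>0 \<le> p\<close> by (intro powr_mono2') auto
  also have "\<dots> = 2 powr (- p * k)"
    by (simp add: powr_powr mult.commute)
  finally have "norm s powr - p \<le> 2 powr (- p * k)" .
  moreover have "s \<in> ball 0 (2 ^ Suc k)"
    using k(2) powr_realpow[of 2 "Suc k"] by (simp add: add.commute)
  ultimately have "ennreal (norm s powr - p) * indicator (- ball 0 1) s
               \<le> ennreal (2 powr (- p * k)) * indicator (ball 0 (2 ^ Suc k)) s"
    using True by (simp add: ennreal_leI)
  also have "\<dots> \<le> (\<Sum>k. ennreal (2 powr (- p * k)) * indicator (ball 0 (2 ^ Suc k)) s)"
  proof -
    define F :: "nat \<Rightarrow> ennreal" where "F k = ennreal (2 powr (- p * k)) * indicator (ball 0 (2 ^ Suc k)) s" for k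
    have "F k \<le> suminf F"
      using sum_le_suminf[of F "{k}"] by (simp add: summableI)
    then show ?thesis
      by (simp only: F_def[abs_def])
  qed
  finally show ?thesis .
next
  case False
  then have "indicator (- ball 0 1) s = (0::ennreal)"
    by simp
  then show ?thesis
    by simp
qed

lemma powr_dyadic_eq:
  fixes p :: real and d k :: nat
  shows "2 powr (- p * k) * (2 ^ Suc k) ^ d = 2 ^ d * (2 powr (d - p)) ^ k"
proof -
  have "(2::real) ^ Suc k = 2 powr (1 + real k)"
    by (simp add: powr_add powr_realpow)
  then have "((2::real) ^ Suc k) ^ d = 2 powr (real d * (1 + real k))"
    by (simp add: powr_power)
  moreover have "(2 powr (real d - p)) ^ k = 2 powr (real k * (real d - p))"
    by (simp add: powr_power)
  moreover have "(2::real) ^ d = 2 powr real d"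
    by (simp add: powr_realpow)
  ultimately show ?thesis
    by (simp add: powr_add[symmetric] algebra_simps)
qed

lemma nn_integral_norm_powr_outside_ball_finite:
  assumes "real DIM('a) < p"
  shows "(\<integral>\<^sup>+s. ennreal (norm s powr - p) * indicator (- ball (0::'a::euclidean_space) 1) s \<partial>lborel) < \<infinity>"
proof -
  define q :: real where "q = 2 powr (DIM('a) - p)"
  have "q < 2 powr 0"
    unfolding q_def using assms by (intro powr_less_mono) auto
  then have q: "0 < q" "q < 1"
    by (auto simp: q_def)
  have "ennreal (norm s powr - p) * indicator (- ball 0 1) s
          \<le> (\<Sum>k. ennreal (2 powr (- p * k)) * indicator (ball 0 (2 ^ Suc k)) s)" for s :: 'a
  proof (rule norm_powr_le_dyadic_sum)
    have "0 \<le> real DIM('a)"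
      by simp
    then show "0 \<le> p"
      using assms by linarith
  qed
  then have "(\<integral>\<^sup>+s. ennreal (norm s powr - p) * indicator (- ball (0::'a) 1) s \<partial>lborel)
               \<le> (\<integral>\<^sup>+s. (\<Sum>k. ennreal (2 powr (- p * k)) * indicator (ball (0::'a) (2 ^ Suc k)) s) \<partial>lborel)"
    by (intro nn_integral_mono)
  also have "\<dots> = (\<Sum>k. \<integral>\<^sup>+s. ennreal (2 powr (- p * k)) * indicator (ball (0::'a) (2 ^ Suc k)) s \<partial>lborel)"
    by (intro nn_integral_suminf) measurable
  also have "\<dots> = (\<Sum>k. ennreal (2 powr (- p * k)) * emeasure lborel (ball (0::'a) (2 ^ Suc k)))"
    by (subst nn_integral_cmult_indicator) auto
  also have "\<dots> = (\<Sum>k. ennreal (unit_ball_vol DIM('a) * 2 ^ DIM('a) * q ^ k))"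
  proof -
    have "2 powr (- p * k) * (2 ^ Suc k) ^ DIM('a) = 2 ^ DIM('a) * q ^ k" for k :: nat
      unfolding q_def by (rule powr_dyadic_eq)
    then show ?thesis
      by (simp add: emeasure_ball ennreal_mult[symmetric] ac_simps)
  qed
  also have "\<dots> < \<infinity>"
  proof -
    have "summable (\<lambda>k. unit_ball_vol DIM('a) * 2 ^ DIM('a) * q ^ k)"
      using q by (intro summable_mult summable_geometric) auto
    then show ?thesis
      using q by (simp add: ennreal_suminf_neq_top less_top[symmetric])
  qed
  finally show ?thesis .
qed

section \<open>Luxemburg norms\<close>

definition orlicz_modular :: "(real \<Rightarrow> real) \<Rightarrow> ('a::euclidean_space \<Rightarrow> real) \<Rightarrow> real \<Rightarrow> ennreal" where
  "orlicz_modular M u l = (\<integral>\<^sup>+x. ennreal (M (\<bar>u x\<bar> / l)) \<partial>lborel)"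

lemma orlicz_norm_eq_Inf: "orlicz_norm M u = Inf {ennreal l |l. 0 < l \<and> orlicz_modular M u l \<le> 1}"
  by (simp add: orlicz_norm_def orlicz_modular_def nn_integral_completion)

lemma orlicz_norm_le: "0 < l \<Longrightarrow> orlicz_modular M u l \<le> 1 \<Longrightarrow> orlicz_norm M u \<le> ennreal l"
  by (auto simp: orlicz_norm_eq_Inf intro!: Inf_lower)

lemma orlicz_norm_cong_AE: "AE x in lborel. u x = v x \<Longrightarrow> orlicz_norm M u = orlicz_norm M v"
proof -
  assume "AE x in lborel. u x = v x"
  then have "orlicz_modular M u l = orlicz_modular M v l" for l
    unfolding orlicz_modular_def by (intro nn_integral_cong_AE) auto
  then show ?thesis
    by (simp add: orlicz_norm_eq_Inf)
qed

lemma orlicz_norm_mono: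
  assumes "mono_on {0..} M" and "\<And>x. \<bar>u x\<bar> \<le> \<bar>v x\<bar>"
  shows "orlicz_norm M u \<le> orlicz_norm M v"
proof -
  have "orlicz_modular M u l \<le> orlicz_modular M v l" if "0 < l" for l
    unfolding orlicz_modular_def using assms that
    by (intro nn_integral_mono ennreal_leI mono_onD[OF assms(1)] divide_right_mono) auto
  then show ?thesis
    unfolding orlicz_norm_eq_Inf by (intro Inf_superset_mono) (auto intro: order_trans)
qed

lemma ennreal_le_Inf_add:
  fixes x y :: ennreal
  assumes "\<And>a. a \<in> A \<Longrightarrow> x \<le> a + y"
  shows "x \<le> Inf A + y"
proof (rule ennreal_le_epsilon)
  fix e :: real
  assume "Inf A + y < top" "0 < e"
  then have "Inf A < Inf A + ennreal e"
    by (cases "Inf A") (auto simp: ennreal_plus[symmetric] ennreal_less_iff simp del: ennreal_plus)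
  then obtain a where "a \<in> A" "a < Inf A + ennreal e"
    by (auto simp: Inf_less_iff)
  then have "x \<le> Inf A + ennreal e + y"
    using assms[of a] by (meson add_right_mono less_imp_le order_trans)
  then show "x \<le> Inf A + y + ennreal e"
    by (simp add: ac_simps)
qed

lemma LlogL_modular_le_inverse:
  assumes [measurable]: "u \<in> borel_measurable borel"
    and "0 < l" "orlicz_modular LlogL u l \<le> 1" "1 \<le> c" "c * l \<le> l'"
  shows "orlicz_modular LlogL u l' \<le> ennreal (1 / c)"
proof -
  have "0 < c * l"
    using assms by simp
  then have "0 < l'"
    using assms by linarith
  have "ennreal (LlogL (\<bar>u x\<bar> / l')) \<le> ennreal (1 / c) * ennreal (LlogL (\<bar>u x\<bar> / l))" for x
  proof -
    have "LlogL (\<bar>u x\<bar> / l') \<le> LlogL (\<bar>u x\<bar> / (c * l))"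
      using assms \<open>0 < c * l\<close> \<open>0 < l'\<close> by (intro LlogL_mono divide_left_mono) auto
    also have "\<dots> = LlogL ((\<bar>u x\<bar> / l) / c)"
      by (simp add: mult.commute)
    also have "\<dots> \<le> 1 / c * LlogL (\<bar>u x\<bar> / l)"
      using assms LlogL_div_le[of "\<bar>u x\<bar> / l" c] by simp
    finally have "ennreal (LlogL (\<bar>u x\<bar> / l')) \<le> ennreal (1 / c * LlogL (\<bar>u x\<bar> / l))"
      by (rule ennreal_leI)
    also have "\<dots> = ennreal (1 / c) * ennreal (LlogL (\<bar>u x\<bar> / l))"
      using assms LlogL_nonneg[of "\<bar>u x\<bar> / l"] by (intro ennreal_mult) auto
    finally show ?thesis .
  qed
  then have "orlicz_modular LlogL u l' \<le> (\<integral>\<^sup>+x. ennreal (1 / c) * ennreal (LlogL (\<bar>u x\<bar> / l)) \<partial>lborel)"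
    unfolding orlicz_modular_def by (intro nn_integral_mono)
  also have "\<dots> = ennreal (1 / c) * orlicz_modular LlogL u l"
    by (simp add: orlicz_modular_def nn_integral_cmult)
  also have "\<dots> \<le> ennreal (1 / c)"
    using assms mult_left_mono[of "orlicz_modular LlogL u l" 1 "ennreal (1 / c)"] by simp
  finally show ?thesis .
qed

lemma nn_integral_abs_le_of_LlogL_modular:
  assumes [measurable]: "u \<in> borel_measurable borel"
    and "0 < l" "orlicz_modular LlogL u l \<le> 1"
  shows "(\<integral>\<^sup>+x. ennreal \<bar>u x\<bar> \<partial>lborel) \<le> ennreal l"
proof -
  have "\<bar>u x\<bar> \<le> l * LlogL (\<bar>u x\<bar> / l)" for x
    using le_LlogL[of "\<bar>u x\<bar> / l"] \<open>0 < l\<close> by (simp add: field_simps)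
  then have "(\<integral>\<^sup>+x. ennreal \<bar>u x\<bar> \<partial>lborel) \<le> (\<integral>\<^sup>+x. ennreal l * ennreal (LlogL (\<bar>u x\<bar> / l)) \<partial>lborel)"
    using \<open>0 < l\<close> LlogL_nonneg
    by (intro nn_integral_mono) (simp add: ennreal_mult[symmetric] ennreal_leI)
  also have "\<dots> = ennreal l * orlicz_modular LlogL u l"
    by (simp add: orlicz_modular_def nn_integral_cmult)
  also have "\<dots> \<le> ennreal l"
    using assms mult_left_mono[of "orlicz_modular LlogL u l" 1 "ennreal l"] by simp
  finally show ?thesis .
qed

section \<open>The modular of \<open>V f\<close> on the unit ball\<close>

definition inverted_LlogL :: "('a::euclidean_space \<Rightarrow> real) \<Rightarrow> real \<Rightarrow> 'a \<Rightarrow> real" where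
  "inverted_LlogL f l s = \<bar>f s\<bar> / l * ln (exp 1 + norm s ^ (2 * DIM('a)) * (\<bar>f s\<bar> / l))"

definition outer_modular :: "('a::euclidean_space \<Rightarrow> real) \<Rightarrow> real \<Rightarrow> ennreal" where
  "outer_modular f l = (\<integral>\<^sup>+s. ennreal (inverted_LlogL f l s) * indicator (- ball 0 1) s \<partial>lborel)"

definition log_moment :: "('a::euclidean_space \<Rightarrow> real) \<Rightarrow> ennreal" where
  "log_moment f = (\<integral>\<^sup>+s. ennreal (\<bar>f s\<bar> * ln (1 + norm s)) \<partial>lborel)"

lemma inverted_LlogL_nonneg: "0 < l \<Longrightarrow> 0 \<le> inverted_LlogL f l s"
  using ln_exp1_add_ge_1[of "norm s ^ (2 * DIM('a)) * (\<bar>f s\<bar> / l)"] by (simp add: inverted_LlogL_def)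

lemma inverted_LlogL_measurable [measurable]:
  assumes [measurable]: "f \<in> borel_measurable borel"
  shows "inverted_LlogL f l \<in> borel_measurable borel"
  unfolding inverted_LlogL_def[abs_def] by measurable

lemma LlogL_Vop: "LlogL (\<bar>Vop f t\<bar> / l) = inversion_weight t * inverted_LlogL f l (inversion t)"
proof -
  have "inversion_weight t = norm (inversion t) ^ (2 * DIM('a))"
    using inversion_weight_inversion[of "inversion t"] by simp
  then show ?thesis
    by (simp add: LlogL_def inverted_LlogL_def Vop_eq abs_mult inversion_weight_nonneg ac_simps)
qed

lemma LlogL_modular_Vop_ball:
  fixes f :: "'a::euclidean_space \<Rightarrow> real"
  assumes "0 < l"
  shows "orlicz_modular LlogL (\<lambda>t. Vop f t * indicator (ball 0 1) t) l
           = (\<integral>\<^sup>+t. ennreal (inversion_weight t) *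
                (ennreal (inverted_LlogL f l (inversion t)) * indicator (- ball 0 1) (inversion t)) \<partial>lborel)"
  unfolding orlicz_modular_def
proof (rule nn_integral_cong_AE)
  have "sphere (0::'a) 1 \<in> null_sets lborel"
    using negligible_sphere[of "0::'a" 1]
    by (auto simp: null_sets_completion_iff negligible_iff_null_sets)
  then show "AE t in lborel. ennreal (LlogL (\<bar>Vop f t * indicator (ball 0 1) t\<bar> / l)) =
      ennreal (inversion_weight t) * (ennreal (inverted_LlogL f l (inversion t)) * indicator (- ball 0 1) (inversion t))"
  proof (rule AE_not_in[THEN eventually_mono])
    fix t :: 'a
    assume "t \<notin> sphere 0 1"
    show "ennreal (LlogL (\<bar>Vop f t * indicator (ball 0 1) t\<bar> / l)) =
        ennreal (inversion_weight t) * (ennreal (inverted_LlogL f l (inversion t)) * indicator (- ball 0 1) (inversion t))"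
    proof (cases "t = 0")
      case False
      then have "t \<in> ball 0 1 \<longleftrightarrow> inversion t \<in> - ball 0 1"
        using \<open>t \<notin> sphere 0 1\<close> by (auto simp: inverse_less_1_iff)
      then show ?thesis
        using assms by (cases "t \<in> ball 0 1")
          (simp_all add: LlogL_Vop ennreal_mult inverted_LlogL_nonneg inversion_weight_nonneg)
    qed (simp add: Vop_eq)
  qed
qed

lemma LlogL_modular_Vop_ball_le:
  fixes f :: "'a::euclidean_space \<Rightarrow> real"
  assumes [measurable]: "f \<in> borel_measurable borel" and "0 < l"
  shows "orlicz_modular LlogL (\<lambda>t. Vop f t * indicator (ball 0 1) t) l
           \<le> ennreal ((45/2) ^ DIM('a)) * outer_modular f l"
  using nn_integral_inversion_le[of "\<lambda>s. ennreal (inverted_LlogL f l s) * indicator (- ball 0 1) s"] assms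
  by (simp add: LlogL_modular_Vop_ball outer_modular_def)

lemma outer_modular_le_LlogL_modular_Vop_ball:
  fixes f :: "'a::euclidean_space \<Rightarrow> real"
  assumes [measurable]: "f \<in> borel_measurable borel" and "0 < l"
  shows "outer_modular f l
           \<le> ennreal ((45/2) ^ DIM('a)) * orlicz_modular LlogL (\<lambda>t. Vop f t * indicator (ball 0 1) t) l"
  using nn_integral_le_inversion[of "\<lambda>s. ennreal (inverted_LlogL f l s) * indicator (- ball 0 1) s"] assms
  by (simp add: LlogL_modular_Vop_ball outer_modular_def)

section \<open>Upper estimate\<close>

lemma outer_modular_le:
  fixes f :: "'a::euclidean_space \<Rightarrow> real"
  assumes [measurable]: "f \<in> borel_measurable borel" and "0 < l"
  shows "outer_modular f l \<le> orlicz_modular LlogL f l + ennreal (2 * DIM('a) / l) * log_moment f"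
proof -
  have "ennreal (inverted_LlogL f l s) * indicator (- ball 0 1) s
          \<le> ennreal (LlogL (\<bar>f s\<bar> / l)) + ennreal (2 * DIM('a) / l) * ennreal (\<bar>f s\<bar> * ln (1 + norm s))" for s
  proof (cases "s \<in> ball 0 1")
    case False
    then have "inverted_LlogL f l s \<le> LlogL (\<bar>f s\<bar> / l) + 2 * DIM('a) / l * (\<bar>f s\<bar> * ln (1 + norm s))"
      using weighted_le_LlogL_add_log[of "\<bar>f s\<bar> / l" "norm s" "DIM('a)"] assms
      by (simp add: inverted_LlogL_def)
    then show ?thesis
      using False assms
      by (simp add: ennreal_mult[symmetric] ennreal_plus[symmetric] LlogL_nonneg ennreal_leI del: ennreal_plus)
  qed simp
  then have "outer_modular f l \<le> (\<integral>\<^sup>+s. ennreal (LlogL (\<bar>f s\<bar> / l))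
               + ennreal (2 * DIM('a) / l) * ennreal (\<bar>f s\<bar> * ln (1 + norm s)) \<partial>lborel)"
    unfolding outer_modular_def by (intro nn_integral_mono)
  also have "\<dots> = orlicz_modular LlogL f l + ennreal (2 * DIM('a) / l) * log_moment f"
    by (simp add: nn_integral_add nn_integral_cmult orlicz_modular_def log_moment_def)
  finally show ?thesis .
qed

lemma outer_modular_le_inverse:
  fixes f :: "'a::euclidean_space \<Rightarrow> real"
  assumes [measurable]: "f \<in> borel_measurable borel"
    and l: "0 < l" "orlicz_modular LlogL f l \<le> 1" and a: "0 \<le> a" "log_moment f \<le> ennreal a"
    and "1 \<le> \<beta>"
  shows "outer_modular f (\<beta> * (l + a)) \<le> ennreal ((1 + 2 * DIM('a)) / \<beta>)"
proof -
  define L where "L = \<beta> * (l + a)"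
  have "0 < L"
    using l a \<open>1 \<le> \<beta>\<close> by (simp add: L_def)
  have modular_f: "orlicz_modular LlogL f L \<le> ennreal (1 / \<beta>)"
    using l a \<open>1 \<le> \<beta>\<close> by (intro LlogL_modular_le_inverse) (auto simp: L_def)
  have "2 * DIM('a) / L * a = 2 * DIM('a) / \<beta> * (a / (l + a))"
    using l a by (simp add: L_def)
  also have "\<dots> \<le> 2 * DIM('a) / \<beta> * 1"
    using l a \<open>1 \<le> \<beta>\<close> by (intro mult_left_mono) auto
  finally have "2 * DIM('a) / L * a \<le> 2 * DIM('a) / \<beta>"
    by simp
  have "ennreal (2 * DIM('a) / L) * log_moment f \<le> ennreal (2 * DIM('a) / L) * ennreal a"
    by (rule mult_left_mono[OF a(2)]) simp
  also have "\<dots> = ennreal (2 * DIM('a) / L * a)"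
    using a \<open>0 < L\<close> by (intro ennreal_mult[symmetric]) auto
  also have "\<dots> \<le> ennreal (2 * DIM('a) / \<beta>)"
    by (rule ennreal_leI) fact
  finally have log_part: "ennreal (2 * DIM('a) / L) * log_moment f \<le> ennreal (2 * DIM('a) / \<beta>)" .
  have "outer_modular f L \<le> orlicz_modular LlogL f L + ennreal (2 * DIM('a) / L) * log_moment f"
    using \<open>0 < L\<close> by (intro outer_modular_le) simp_all
  also have "\<dots> \<le> ennreal (1 / \<beta>) + ennreal (2 * DIM('a) / \<beta>)"
    by (rule add_mono[OF modular_f log_part])
  also have "\<dots> = ennreal (1 / \<beta> + 2 * DIM('a) / \<beta>)"
    using \<open>1 \<le> \<beta>\<close> by (intro ennreal_plus[symmetric]) auto
  finally show ?thesis
    by (simp add: L_def add_divide_distrib)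
qed

lemma orlicz_norm_Vop_ball_le_of_modular:
  fixes f :: "'a::euclidean_space \<Rightarrow> real"
  assumes [measurable]: "f \<in> borel_measurable borel"
    and l: "0 < l" "orlicz_modular LlogL f l \<le> 1" and a: "0 \<le> a" "log_moment f \<le> ennreal a"
  shows "orlicz_norm LlogL (\<lambda>t. Vop f t * indicator (ball 0 1) t)
           \<le> ennreal ((45/2) ^ DIM('a) * (1 + 2 * DIM('a)) * (l + a))"
proof -
  define K :: real where "K = (45/2) ^ DIM('a)"
  define \<beta> where "\<beta> = K * (1 + 2 * DIM('a))"
  have "1 \<le> K"
    by (simp add: K_def)
  then have "K \<le> \<beta>"
    by (simp add: \<beta>_def)
  with \<open>1 \<le> K\<close> have "1 \<le> \<beta>"
    by linarith
  then have "0 < \<beta> * (l + a)"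
    using l a by simp
  then have "orlicz_modular LlogL (\<lambda>t. Vop f t * indicator (ball 0 1) t) (\<beta> * (l + a))
               \<le> ennreal K * outer_modular f (\<beta> * (l + a))"
    using LlogL_modular_Vop_ball_le[of f] by (simp add: K_def)
  also have "\<dots> \<le> ennreal K * ennreal ((1 + 2 * DIM('a)) / \<beta>)"
    using outer_modular_le_inverse[OF _ l a \<open>1 \<le> \<beta>\<close>] by (intro mult_left_mono) simp_all
  also have "\<dots> = 1"
    using \<open>1 \<le> K\<close> by (simp add: \<beta>_def ennreal_mult[symmetric])
  finally have "orlicz_norm LlogL (\<lambda>t. Vop f t * indicator (ball 0 1) t) \<le> ennreal (\<beta> * (l + a))"
    by (rule orlicz_norm_le[OF \<open>0 < \<beta> * (l + a)\<close>])
  then show ?thesis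
    by (simp add: \<beta>_def K_def)
qed

lemma orlicz_norm_Vop_ball_le:
  fixes f :: "'a::euclidean_space \<Rightarrow> real"
  assumes [measurable]: "f \<in> borel_measurable borel"
  shows "orlicz_norm LlogL (\<lambda>t. Vop f t * indicator (ball 0 1) t)
           \<le> ennreal ((45/2) ^ DIM('a) * (1 + 2 * DIM('a))) * (orlicz_norm LlogL f + log_moment f)"
proof -
  define \<beta> :: real where "\<beta> = (45/2) ^ DIM('a) * (1 + 2 * DIM('a))"
  have "0 < \<beta>"
    by (simp add: \<beta>_def)
  have "orlicz_norm LlogL (\<lambda>t. Vop f t * indicator (ball 0 1) t)
          \<le> ennreal \<beta> * (orlicz_norm LlogL f + log_moment f)"
  proof (cases "log_moment f")
    case (real a)
    have "ennreal (1 / \<beta>) * orlicz_norm LlogL (\<lambda>t. Vop f t * indicator (ball 0 1) t)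
            \<le> orlicz_norm LlogL f + ennreal a"
      unfolding orlicz_norm_eq_Inf[of LlogL f]
    proof (rule ennreal_le_Inf_add, clarify)
      fix l
      assume "0 < l" "orlicz_modular LlogL f l \<le> 1"
      then have "orlicz_norm LlogL (\<lambda>t. Vop f t * indicator (ball 0 1) t) \<le> ennreal (\<beta> * (l + a))"
        using orlicz_norm_Vop_ball_le_of_modular[of f l a] real by (simp add: \<beta>_def)
      then have "ennreal (1 / \<beta>) * orlicz_norm LlogL (\<lambda>t. Vop f t * indicator (ball 0 1) t)
                   \<le> ennreal (1 / \<beta>) * ennreal (\<beta> * (l + a))"
        by (rule mult_left_mono) simp
      also have "\<dots> = ennreal l + ennreal a"
        using \<open>0 < \<beta>\<close> \<open>0 < l\<close> real by (simp add: ennreal_mult[symmetric] ennreal_plus)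
      finally show "ennreal (1 / \<beta>) * orlicz_norm LlogL (\<lambda>t. Vop f t * indicator (ball 0 1) t)
                      \<le> ennreal l + ennreal a" .
    qed
    then have "ennreal \<beta> * (ennreal (1 / \<beta>) * orlicz_norm LlogL (\<lambda>t. Vop f t * indicator (ball 0 1) t))
                 \<le> ennreal \<beta> * (orlicz_norm LlogL f + ennreal a)"
      by (rule mult_left_mono) simp
    then show ?thesis
      using \<open>0 < \<beta>\<close> real by (simp add: mult.assoc[symmetric] ennreal_mult[symmetric])
  qed (use \<open>0 < \<beta>\<close> in \<open>simp add: ennreal_mult_top\<close>)
  then show ?thesis
    by (simp add: \<beta>_def)
qed

lemma orlicz_norm_ball_add_Vop_ball_le:
  fixes f :: "'a::euclidean_space \<Rightarrow> real"
  assumes [measurable]: "f \<in> borel_measurable borel"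
  shows "orlicz_norm LlogL (\<lambda>x. f x * indicator (ball 0 1) x)
           + orlicz_norm LlogL (\<lambda>x. Vop f x * indicator (ball 0 1) x)
         \<le> ennreal (1 + (45/2) ^ DIM('a) * (1 + 2 * DIM('a))) * (orlicz_norm LlogL f + log_moment f)"
proof -
  define \<beta> :: real where "\<beta> = (45/2) ^ DIM('a) * (1 + 2 * DIM('a))"
  have "orlicz_norm LlogL (\<lambda>x. f x * indicator (ball 0 1) x) \<le> orlicz_norm LlogL f"
    by (intro orlicz_norm_mono mono_onI LlogL_mono) (auto simp: indicator_def)
  also have "\<dots> \<le> orlicz_norm LlogL f + log_moment f"
    by simp
  finally have "orlicz_norm LlogL (\<lambda>x. f x * indicator (ball 0 1) x)
      + orlicz_norm LlogL (\<lambda>x. Vop f x * indicator (ball 0 1) x)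
      \<le> (orlicz_norm LlogL f + log_moment f) + ennreal \<beta> * (orlicz_norm LlogL f + log_moment f)"
    using orlicz_norm_Vop_ball_le[of f] by (intro add_mono) (simp_all add: \<beta>_def)
  also have "\<dots> = ennreal (1 + \<beta>) * (orlicz_norm LlogL f + log_moment f)"
    by (simp add: \<beta>_def ennreal_plus distrib_right)
  finally show ?thesis
    by (simp add: \<beta>_def)
qed

section \<open>Lower estimate\<close>

lemma LlogL_modular_le_ball_add_outer:
  fixes f :: "'a::euclidean_space \<Rightarrow> real"
  assumes [measurable]: "f \<in> borel_measurable borel" and "0 < l"
  shows "orlicz_modular LlogL f l
           \<le> orlicz_modular LlogL (\<lambda>x. f x * indicator (ball 0 1) x) l + outer_modular f l"
proof -
  have "ennreal (LlogL (\<bar>f s\<bar> / l)) \<le> ennreal (LlogL (\<bar>f s * indicator (ball 0 1) s\<bar> / l))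
          + ennreal (inverted_LlogL f l s) * indicator (- ball 0 1) s" for s
  proof (cases "s \<in> ball 0 1")
    case False
    then have "1 \<le> norm s ^ (2 * DIM('a))"
      by (simp add: one_le_power)
    then have "LlogL (\<bar>f s\<bar> / l) \<le> inverted_LlogL f l s"
      using LlogL_le_weighted[of "\<bar>f s\<bar> / l" "norm s ^ (2 * DIM('a))"] \<open>0 < l\<close>
      by (simp add: inverted_LlogL_def)
    then show ?thesis
      using False by (simp add: ennreal_leI)
  qed simp
  then have "orlicz_modular LlogL f l \<le> (\<integral>\<^sup>+s. ennreal (LlogL (\<bar>f s * indicator (ball 0 1) s\<bar> / l))
               + ennreal (inverted_LlogL f l s) * indicator (- ball 0 1) s \<partial>lborel)"
    unfolding orlicz_modular_def by (intro nn_integral_mono)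
  also have "\<dots> = orlicz_modular LlogL (\<lambda>x. f x * indicator (ball 0 1) x) l + outer_modular f l"
    by (simp add: nn_integral_add orlicz_modular_def outer_modular_def)
  finally show ?thesis .
qed

lemma orlicz_norm_le_of_ball_modulars:
  fixes f :: "'a::euclidean_space \<Rightarrow> real"
  assumes [measurable]: "f \<in> borel_measurable borel"
    and l1: "0 < l1" "orlicz_modular LlogL (\<lambda>x. f x * indicator (ball 0 1) x) l1 \<le> 1"
    and l2: "0 < l2" "orlicz_modular LlogL (\<lambda>t. Vop f t * indicator (ball 0 1) t) l2 \<le> 1"
  shows "orlicz_norm LlogL f \<le> ennreal (2 * (45/2) ^ DIM('a) * (l1 + l2))"
proof -
  define K :: real where "K = (45/2) ^ DIM('a)"
  define L where "L = 2 * K * (l1 + l2)"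
  have "1 \<le> K"
    by (simp add: K_def)
  then have "0 < L" "1 \<le> 2 * K"
    using l1 l2 by (simp_all add: L_def)
  have "orlicz_modular LlogL f L
          \<le> orlicz_modular LlogL (\<lambda>x. f x * indicator (ball 0 1) x) L + outer_modular f L"
    using \<open>0 < L\<close> by (intro LlogL_modular_le_ball_add_outer) simp_all
  also have "\<dots> \<le> ennreal (1 / (2 * K)) + ennreal K * ennreal (1 / (2 * K))"
  proof (rule add_mono)
    show "orlicz_modular LlogL (\<lambda>x. f x * indicator (ball 0 1) x) L \<le> ennreal (1 / (2 * K))"
      using l1 l2 \<open>1 \<le> 2 * K\<close> by (intro LlogL_modular_le_inverse) (auto simp: L_def)
    have "outer_modular f L \<le> ennreal K * orlicz_modular LlogL (\<lambda>t. Vop f t * indicator (ball 0 1) t) L"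
      using outer_modular_le_LlogL_modular_Vop_ball[of f L] \<open>0 < L\<close> by (simp add: K_def)
    also have "\<dots> \<le> ennreal K * ennreal (1 / (2 * K))"
      using l1 l2 \<open>1 \<le> 2 * K\<close>
      by (intro mult_left_mono LlogL_modular_le_inverse) (auto simp: L_def)
    finally show "outer_modular f L \<le> ennreal K * ennreal (1 / (2 * K))" .
  qed
  also have "\<dots> = ennreal (1 / (2 * K)) + ennreal (1 / 2)"
    using \<open>1 \<le> K\<close> by (simp add: ennreal_mult[symmetric])
  also have "\<dots> = ennreal (1 / (2 * K) + 1 / 2)"
    using \<open>1 \<le> K\<close> by (intro ennreal_plus[symmetric]) auto
  also have "\<dots> \<le> 1"
    using \<open>1 \<le> K\<close> by (intro ennreal_le_1[THEN iffD2]) (simp add: field_simps)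
  finally show ?thesis
    using orlicz_norm_le[OF \<open>0 < L\<close>] by (simp add: L_def K_def)
qed

lemma log_moment_integrand_le:
  fixes f :: "'a::euclidean_space \<Rightarrow> real"
  assumes "0 < l"
  shows "ennreal (\<bar>f s\<bar> * ln (1 + norm s)) \<le> ennreal \<bar>f s * indicator (ball 0 1) s\<bar>
           + (ennreal (3 * l) * (ennreal (inverted_LlogL f l s) * indicator (- ball 0 1) s)
           + ennreal (4 * l) * (ennreal (norm s powr - (DIM('a) + 1/4)) * indicator (- ball 0 1) s))"
proof (cases "s \<in> ball 0 1")
  case True
  then have "\<bar>f s\<bar> * ln (1 + norm s) \<le> \<bar>f s\<bar> * 1"
    using ln_add_one_self_le_self[of "norm s"] by (intro mult_left_mono) auto
  then show ?thesis
    using True by (simp add: ennreal_leI)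
next
  case False
  then have "\<bar>f s\<bar> / l * ln (1 + norm s)
               \<le> 3 * inverted_LlogL f l s + 4 * norm s powr - (DIM('a) + 1/4)"
    using log_le_weighted[of "\<bar>f s\<bar> / l" "norm s" "DIM('a)"] assms
    by (simp add: inverted_LlogL_def)
  then have "\<bar>f s\<bar> * ln (1 + norm s)
               \<le> 3 * l * inverted_LlogL f l s + 4 * l * norm s powr - (DIM('a) + 1/4)"
    using assms by (simp add: field_simps)
  then show ?thesis
    using False assms inverted_LlogL_nonneg[OF assms, of f s]
    by (simp add: ennreal_mult[symmetric] ennreal_plus[symmetric] ennreal_leI del: ennreal_plus)
qed

lemma log_moment_le_of_ball_modulars:
  fixes f :: "'a::euclidean_space \<Rightarrow> real"
  assumes [measurable]: "f \<in> borel_measurable borel"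
    and l1: "0 < l1" "orlicz_modular LlogL (\<lambda>x. f x * indicator (ball 0 1) x) l1 \<le> 1"
    and l2: "0 < l2" "orlicz_modular LlogL (\<lambda>t. Vop f t * indicator (ball 0 1) t) l2 \<le> 1"
    and \<Psi>: "(\<integral>\<^sup>+s. ennreal (norm s powr - (DIM('a) + 1/4)) * indicator (- ball (0::'a) 1) s \<partial>lborel)
              \<le> ennreal \<Psi>" "0 \<le> \<Psi>"
  shows "log_moment f \<le> ennreal (l1 + (3 * (45/2) ^ DIM('a) + 4 * \<Psi>) * l2)"
proof -
  define K :: real where "K = (45/2) ^ DIM('a)"
  have "0 \<le> K"
    by (simp add: K_def)
  have "log_moment f \<le> (\<integral>\<^sup>+s. ennreal \<bar>f s * indicator (ball 0 1) s\<bar>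
          + (ennreal (3 * l2) * (ennreal (inverted_LlogL f l2 s) * indicator (- ball 0 1) s)
          + ennreal (4 * l2) * (ennreal (norm s powr - (DIM('a) + 1/4)) * indicator (- ball 0 1) s)) \<partial>lborel)"
    unfolding log_moment_def using l2 by (intro nn_integral_mono log_moment_integrand_le) simp
  also have "\<dots> = (\<integral>\<^sup>+s. ennreal \<bar>f s * indicator (ball 0 1) s\<bar> \<partial>lborel)
      + (ennreal (3 * l2) * outer_modular f l2
      + ennreal (4 * l2) * (\<integral>\<^sup>+s. ennreal (norm s powr - (DIM('a) + 1/4)) * indicator (- ball (0::'a) 1) s \<partial>lborel))"
    by (simp add: nn_integral_add nn_integral_cmult outer_modular_def)
  also have "\<dots> \<le> ennreal l1 + (ennreal (3 * l2) * ennreal K + ennreal (4 * l2) * ennreal \<Psi>)"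
  proof (intro add_mono mult_left_mono)
    show "(\<integral>\<^sup>+s. ennreal \<bar>f s * indicator (ball 0 1) s\<bar> \<partial>lborel) \<le> ennreal l1"
      using l1 by (intro nn_integral_abs_le_of_LlogL_modular) auto
    have "outer_modular f l2 \<le> ennreal K * orlicz_modular LlogL (\<lambda>t. Vop f t * indicator (ball 0 1) t) l2"
      using outer_modular_le_LlogL_modular_Vop_ball[of f l2] l2 by (simp add: K_def)
    also have "\<dots> \<le> ennreal K"
      using mult_left_mono[OF l2(2), of "ennreal K"] by simp
    finally show "outer_modular f l2 \<le> ennreal K" .
  qed (use \<Psi> in auto)
  also have "\<dots> = ennreal (l1 + (3 * l2 * K + 4 * l2 * \<Psi>))"
    using l1 l2 \<Psi> \<open>0 \<le> K\<close> by (simp add: ennreal_mult ennreal_plus)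
  finally show ?thesis
    by (simp add: K_def algebra_simps)
qed

lemma orlicz_norm_add_log_moment_le_of_ball_modulars:
  fixes f :: "'a::euclidean_space \<Rightarrow> real"
  assumes [measurable]: "f \<in> borel_measurable borel"
    and l1: "0 < l1" "orlicz_modular LlogL (\<lambda>x. f x * indicator (ball 0 1) x) l1 \<le> 1"
    and l2: "0 < l2" "orlicz_modular LlogL (\<lambda>t. Vop f t * indicator (ball 0 1) t) l2 \<le> 1"
    and \<Psi>: "(\<integral>\<^sup>+s. ennreal (norm s powr - (DIM('a) + 1/4)) * indicator (- ball (0::'a) 1) s \<partial>lborel)
              \<le> ennreal \<Psi>" "0 \<le> \<Psi>"
  shows "orlicz_norm LlogL f + log_moment f \<le> ennreal ((5 * (45/2) ^ DIM('a) + 1 + 4 * \<Psi>) * (l1 + l2))"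
proof -
  define K :: real where "K = (45/2) ^ DIM('a)"
  have "1 \<le> K"
    by (simp add: K_def)
  have "orlicz_norm LlogL f + log_moment f
          \<le> ennreal (2 * K * (l1 + l2)) + ennreal (l1 + (3 * K + 4 * \<Psi>) * l2)"
    using orlicz_norm_le_of_ball_modulars[OF _ l1 l2] log_moment_le_of_ball_modulars[OF _ l1 l2 \<Psi>]
    by (intro add_mono) (simp_all add: K_def)
  also have "\<dots> \<le> ennreal ((5 * K + 1 + 4 * \<Psi>) * (l1 + l2))"
    using l1 l2 \<Psi> \<open>1 \<le> K\<close> by (simp add: ennreal_plus[symmetric] algebra_simps del: ennreal_plus)
  finally show ?thesis
    by (simp add: K_def)
qed

lemma orlicz_norm_add_log_moment_le:
  fixes f :: "'a::euclidean_space \<Rightarrow> real"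
  assumes [measurable]: "f \<in> borel_measurable borel"
    and \<Psi>: "(\<integral>\<^sup>+s. ennreal (norm s powr - (DIM('a) + 1/4)) * indicator (- ball (0::'a) 1) s \<partial>lborel)
              \<le> ennreal \<Psi>" "0 \<le> \<Psi>"
  shows "ennreal (1 / (5 * (45/2) ^ DIM('a) + 1 + 4 * \<Psi>)) * (orlicz_norm LlogL f + log_moment f)
           \<le> orlicz_norm LlogL (\<lambda>x. f x * indicator (ball 0 1) x)
             + orlicz_norm LlogL (\<lambda>x. Vop f x * indicator (ball 0 1) x)"
proof -
  define C :: real where "C = 5 * (45/2) ^ DIM('a) + 1 + 4 * \<Psi>"
  have "1 \<le> C"
    using \<Psi> by (simp add: C_def)
  define X where "X = ennreal (1 / C) * (orlicz_norm LlogL f + log_moment f)"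
  have key: "X \<le> ennreal l1 + ennreal l2"
    if l1: "0 < l1" "orlicz_modular LlogL (\<lambda>x. f x * indicator (ball 0 1) x) l1 \<le> 1"
      and l2: "0 < l2" "orlicz_modular LlogL (\<lambda>t. Vop f t * indicator (ball 0 1) t) l2 \<le> 1" for l1 l2
  proof -
    have "X \<le> ennreal (1 / C) * ennreal (C * (l1 + l2))"
      unfolding X_def C_def using orlicz_norm_add_log_moment_le_of_ball_modulars[OF _ l1 l2 \<Psi>]
      by (intro mult_left_mono) simp_all
    also have "\<dots> = ennreal l1 + ennreal l2"
      using \<open>1 \<le> C\<close> l1 l2 by (simp add: ennreal_mult[symmetric])
    finally show ?thesis .
  qed
  have "X \<le> orlicz_norm LlogL (\<lambda>x. f x * indicator (ball 0 1) x)
             + orlicz_norm LlogL (\<lambda>x. Vop f x * indicator (ball 0 1) x)"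
    unfolding orlicz_norm_eq_Inf[of LlogL "\<lambda>x. f x * indicator (ball 0 1) x"]
  proof (rule ennreal_le_Inf_add, clarify)
    fix l1
    assume l1: "0 < l1" "orlicz_modular LlogL (\<lambda>x. f x * indicator (ball 0 1) x) l1 \<le> 1"
    have "X \<le> orlicz_norm LlogL (\<lambda>x. Vop f x * indicator (ball 0 1) x) + ennreal l1"
      unfolding orlicz_norm_eq_Inf[of LlogL "\<lambda>x. Vop f x * indicator (ball 0 1) x"]
      by (rule ennreal_le_Inf_add, clarify) (use key[OF l1] in \<open>simp add: add.commute\<close>)
    then show "X \<le> ennreal l1 + orlicz_norm LlogL (\<lambda>x. Vop f x * indicator (ball 0 1) x)"
      by (simp add: add.commute)
  qed
  then show ?thesis
    by (simp add: X_def C_def)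
qed

section \<open>Lebesgue measurable functions\<close>

lemma LlogL_norm_estimates:
  fixes f :: "'a::euclidean_space \<Rightarrow> real"
  assumes f: "f \<in> borel_measurable lebesgue"
    and \<Psi>: "(\<integral>\<^sup>+s. ennreal (norm s powr - (DIM('a) + 1/4)) * indicator (- ball (0::'a) 1) s \<partial>lborel)
              \<le> ennreal \<Psi>" "0 \<le> \<Psi>"
  shows "ennreal (1 / (5 * (45/2) ^ DIM('a) + 1 + 4 * \<Psi>))
           * (orlicz_norm LlogL f + (\<integral>\<^sup>+s. ennreal (\<bar>f s\<bar> * ln (1 + norm s)) \<partial>lebesgue))
         \<le> orlicz_norm LlogL (\<lambda>x. f x * indicator (ball 0 1) x)
           + orlicz_norm LlogL (\<lambda>x. Vop f x * indicator (ball 0 1) x)" (is ?lower)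
    and "orlicz_norm LlogL (\<lambda>x. f x * indicator (ball 0 1) x)
           + orlicz_norm LlogL (\<lambda>x. Vop f x * indicator (ball 0 1) x)
         \<le> ennreal (1 + (45/2) ^ DIM('a) * (1 + 2 * DIM('a)))
           * (orlicz_norm LlogL f + (\<integral>\<^sup>+s. ennreal (\<bar>f s\<bar> * ln (1 + norm s)) \<partial>lebesgue))" (is ?upper)
proof -
  obtain g where g: "g \<in> borel_measurable borel" and fg: "AE x in lborel. f x = g x"
    using completion_ex_borel_measurable_real[OF f] by (auto cong: measurable_cong_sets)
  have "orlicz_norm LlogL f = orlicz_norm LlogL g"
    by (rule orlicz_norm_cong_AE[OF fg])
  moreover have "orlicz_norm LlogL (\<lambda>x. f x * indicator (ball 0 1) x)
                   = orlicz_norm LlogL (\<lambda>x. g x * indicator (ball 0 1) x)"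
    using fg by (intro orlicz_norm_cong_AE) (auto elim!: eventually_mono)
  moreover have "orlicz_norm LlogL (\<lambda>x. Vop f x * indicator (ball 0 1) x)
                   = orlicz_norm LlogL (\<lambda>x. Vop g x * indicator (ball 0 1) x)"
    using AE_Vop_eq[OF fg] by (intro orlicz_norm_cong_AE) (auto elim!: eventually_mono)
  moreover have "(\<integral>\<^sup>+s. ennreal (\<bar>f s\<bar> * ln (1 + norm s)) \<partial>lebesgue) = log_moment g"
    unfolding log_moment_def nn_integral_completion
    using fg by (intro nn_integral_cong_AE) (auto elim!: eventually_mono)
  ultimately show ?lower and ?upper
    using orlicz_norm_add_log_moment_le[OF g \<Psi>] orlicz_norm_ball_add_Vop_ball_le[OF g] by simp_all
qed

theorem proposition5p10:
  shows "\<exists>c C::real. 0 < c \<and> c \<le> C \<and>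
    (\<forall>f :: 'a::euclidean_space \<Rightarrow> real. f \<in> borel_measurable lebesgue \<longrightarrow>
      ennreal c * (orlicz_norm LlogL f + (\<integral>\<^sup>+ s. ennreal (\<bar>f s\<bar> * ln (1 + norm s)) \<partial>lebesgue))
        \<le> orlicz_norm LlogL (\<lambda>x. f x * indicator (ball 0 1) x)
          + orlicz_norm LlogL (\<lambda>x. Vop f x * indicator (ball 0 1) x)
      \<and> orlicz_norm LlogL (\<lambda>x. f x * indicator (ball 0 1) x)
          + orlicz_norm LlogL (\<lambda>x. Vop f x * indicator (ball 0 1) x)
        \<le> ennreal C * (orlicz_norm LlogL f + (\<integral>\<^sup>+ s. ennreal (\<bar>f s\<bar> * ln (1 + norm s)) \<partial>lebesgue)))"
proof -
  define K :: real where "K = (45/2) ^ DIM('a)"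
  obtain \<Psi> where \<Psi>: "(\<integral>\<^sup>+s. ennreal (norm s powr - (DIM('a) + 1/4)) * indicator (- ball (0::'a) 1) s \<partial>lborel)
                        \<le> ennreal \<Psi>" "0 \<le> \<Psi>"
    using nn_integral_norm_powr_outside_ball_finite[of "DIM('a) + 1/4", where 'a='a]
    by (cases "\<integral>\<^sup>+s. ennreal (norm s powr - (DIM('a) + 1/4)) * indicator (- ball (0::'a) 1) s \<partial>lborel") auto
  define c where "c = 1 / (5 * K + 1 + 4 * \<Psi>)"
  define C where "C = 1 + K * (1 + 2 * DIM('a))"
  have "1 \<le> K"
    by (simp add: K_def)
  then have "0 < c" "c \<le> 1" "1 \<le> C"
    using \<Psi> by (simp_all add: c_def C_def)
  then have "0 < c \<and> c \<le> C"
    by linarith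
  then show ?thesis
    using LlogL_norm_estimates[OF _ \<Psi>, folded K_def, folded c_def C_def] by blast
qed

end
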